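(* The number of transversals in any symmetric latin square of order $n$ is congruent to $n$ modulo $2$.
   Context: A latin square $L=[l_{ij}]$ of order $n$ is an $n\times n$ array of $n$ symbols in which each symbol occurs exactly once in each row and column; it is symmetric if $l_{ij}=l_{ji}$ for all $i,j$. A transversal is a set of $n$ cells, one from each row and one from each column, no two containing the same symbol. *)

theory Defs
  imports Main
begin

text \<open>An n x n array with rows/columns indexed by 0..n-1, entries of type 'a.
  It is a latin square of order n if it uses exactly n symbols and each symbol
  occurs exactly once in each row and column (equivalently: rows and columns
  are injective and the symbol set has n elements).\<close>
definition latin_square :: "nat \<Rightarrow> (nat \<Rightarrow> nat \<Rightarrow> 'a) \<Rightarrow> bool" where
  "latin_square n L \<longleftrightarrow>
     card {L i j | i j. i < n \<and> j < n} = n \<and>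
     (\<forall>i<n. inj_on (\<lambda>j. L i j) {0..<n}) \<and>
     (\<forall>j<n. inj_on (\<lambda>i. L i j) {0..<n})"

definition symmetric_square :: "nat \<Rightarrow> (nat \<Rightarrow> nat \<Rightarrow> 'a) \<Rightarrow> bool" where
  "symmetric_square n L \<longleftrightarrow> (\<forall>i<n. \<forall>j<n. L i j = L j i)"

definition transversal :: "nat \<Rightarrow> (nat \<Rightarrow> nat \<Rightarrow> 'a) \<Rightarrow> (nat \<times> nat) set \<Rightarrow> bool" where
  "transversal n L T \<longleftrightarrow>
     T \<subseteq> {0..<n} \<times> {0..<n} \<and>
     (\<forall>i<n. \<exists>!j. (i, j) \<in> T) \<and>
     (\<forall>j<n. \<exists>!i. (i, j) \<in> T) \<and>
     inj_on (\<lambda>(i, j). L i j) T"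

end

theory Submission
  imports Defs
begin

(* The argument is a double use of one counting principle: an involution on a
   finite set fixes as many points as the set has elements, modulo 2.

   1. Transposing cells, T \<mapsto> prod.swap ` T, is an involution on the
      transversals of a symmetric latin square, and the only transversal it can
      fix is the main diagonal.  Hence #transversals \<equiv> [diagonal is a
      transversal] (mod 2).
   2. For a fixed symbol s, transposition is an involution on the n cells
      containing s, whose fixed points are the diagonal occurrences of s.
      Hence s occurs on the diagonal a number of times \<equiv> n (mod 2).
      Consequently (for n \<ge> 1) the diagonal carries n distinct symbols,
      i.e. is a transversal, iff n is odd.

   Combining both facts gives #transversals \<equiv> n (mod 2). *)

text \<open>An involution on a finite set S pairs up its non-fixed points, so S and
  its fixed-point set have the same parity.\<close>
lemma card_involution_parity:
  assumes "finite S"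
    and "\<And>x. x \<in> S \<Longrightarrow> f x \<in> S"
    and "\<And>x. x \<in> S \<Longrightarrow> f (f x) = x"
  shows "card S mod 2 = card {x\<in>S. f x = x} mod 2"
  using assms
proof (induction "card S" arbitrary: S rule: less_induct)
  case less
  show ?case
  proof (cases "\<exists>x\<in>S. f x \<noteq> x")
    case False
    then have "{x\<in>S. f x = x} = S" by auto
    then show ?thesis by simp
  next
    case True
    then obtain x where x: "x \<in> S" "f x \<noteq> x" by blast
    define S' where "S' = S - {x, f x}"
    have pair: "{x, f x} \<subseteq> S" "card {x, f x} = 2"
      using x less.prems(2) by auto
    have card_S: "card S = card S' + 2"
      using pair card_mono[OF less.prems(1) pair(1)] card_Diff_subset[of "{x, f x}" S]
      unfolding S'_def by simp
    have maps': "f y \<in> S'" and invol': "f (f y) = y" if "y \<in> S'" for y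
    proof -
      from that have y: "y \<in> S" "y \<noteq> x" "y \<noteq> f x" unfolding S'_def by auto
      show "f (f y) = y" using y less.prems(3) by blast
      have "f y \<noteq> x" "f y \<noteq> f x" using y x less.prems(3) by metis+
      then show "f y \<in> S'" using y less.prems(2) unfolding S'_def by auto
    qed
    have "card S' mod 2 = card {y\<in>S'. f y = y} mod 2"
      using less.hyps[of S'] card_S maps' invol' less.prems(1) unfolding S'_def by auto
    moreover have "{y\<in>S'. f y = y} = {y\<in>S. f y = y}"
      using x less.prems(3) unfolding S'_def by auto
    ultimately show ?thesis using card_S by simp
  qed
qed

lemma latin_row_symbols:
  assumes "latin_square n L" and "i < n"
  shows "(\<lambda>j. L i j) ` {0..<n} = {L i j | i j. i < n \<and> j < n}"
proof (rule card_subset_eq)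
  have "{L i j | i j. i < n \<and> j < n} = (\<lambda>(i, j). L i j) ` ({0..<n} \<times> {0..<n})"
    by fastforce
  then show "finite {L i j | i j. i < n \<and> j < n}" by simp
  show "(\<lambda>j. L i j) ` {0..<n} \<subseteq> {L i j | i j. i < n \<and> j < n}"
    using \<open>i < n\<close> by fastforce
  have "inj_on (\<lambda>j. L i j) {0..<n}"
    using assms unfolding latin_square_def by blast
  then show "card ((\<lambda>j. L i j) ` {0..<n}) = card {L i j | i j. i < n \<and> j < n}"
    using assms(1) by (simp add: card_image latin_square_def)
qed

definition symbol_cells :: "nat \<Rightarrow> (nat \<Rightarrow> nat \<Rightarrow> 'a) \<Rightarrow> 'a \<Rightarrow> (nat \<times> nat) set" where
  "symbol_cells n L s = {(i, j). i < n \<and> j < n \<and> L i j = s}"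

text \<open>Each symbol occupies exactly one cell per row, hence n cells in total.\<close>
lemma card_symbol_cells:
  assumes lat: "latin_square n L" and s: "s \<in> {L i j | i j. i < n \<and> j < n}"
  shows "card (symbol_cells n L s) = n"
proof -
  have one_per_row: "card {j. j < n \<and> L i j = s} = 1" if "i \<in> {0..<n}" for i
  proof -
    have "s \<in> (\<lambda>j. L i j) ` {0..<n}"
      using s latin_row_symbols[OF lat] that by simp
    then obtain j where j: "j < n" "L i j = s" by auto
    have "inj_on (\<lambda>j. L i j) {0..<n}"
      using lat that unfolding latin_square_def by simp
    then have "{j. j < n \<and> L i j = s} = {j}"
      using j unfolding inj_on_def by auto
    then show ?thesis by simp
  qed
  have "symbol_cells n L s = Sigma {0..<n} (\<lambda>i. {j. j < n \<and> L i j = s})"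
    unfolding symbol_cells_def by auto
  then show ?thesis by (simp add: card_SigmaI one_per_row)
qed

lemma swap_fixed_iff: "prod.swap c = c \<longleftrightarrow> (\<exists>i. c = (i, i))"
  by (cases c) auto

text \<open>In a symmetric latin square, each symbol occurs on the diagonal a number
  of times of the same parity as n: transposition is an involution on the cells
  of that symbol whose fixed points are exactly its diagonal cells.\<close>
lemma diagonal_occurrences_parity:
  assumes lat: "latin_square n L" and sym: "symmetric_square n L"
    and s: "s \<in> {L i j | i j. i < n \<and> j < n}"
  shows "card {i. i < n \<and> L i i = s} mod 2 = n mod 2"
proof -
  have "finite (symbol_cells n L s)"
    by (rule finite_subset[of _ "{0..<n} \<times> {0..<n}"]) (auto simp: symbol_cells_def)
  moreover have "prod.swap c \<in> symbol_cells n L s" if "c \<in> symbol_cells n L s" for c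
    using that sym unfolding symbol_cells_def symmetric_square_def by auto
  ultimately have "card (symbol_cells n L s) mod 2
      = card {c \<in> symbol_cells n L s. prod.swap c = c} mod 2"
    by (intro card_involution_parity) simp_all
  moreover have "{c \<in> symbol_cells n L s. prod.swap c = c}
      = (\<lambda>i. (i, i)) ` {i. i < n \<and> L i i = s}"
    unfolding symbol_cells_def swap_fixed_iff by auto
  moreover have "card ((\<lambda>i. (i, i)) ` {i. i < n \<and> L i i = s}) = card {i. i < n \<and> L i i = s}"
    by (rule card_image) (auto simp: inj_on_def)
  ultimately show ?thesis
    using card_symbol_cells[OF lat s] by simp
qed

definition diagonal :: "nat \<Rightarrow> (nat \<times> nat) set" where
  "diagonal n = (\<lambda>i. (i, i)) ` {0..<n}"

lemma transversal_diagonal_iff: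
  "transversal n L (diagonal n) \<longleftrightarrow> inj_on (\<lambda>i. L i i) {0..<n}"
proof -
  have "inj_on (\<lambda>(i, j). L i j) (diagonal n) \<longleftrightarrow> inj_on (\<lambda>i. L i i) {0..<n}"
    unfolding diagonal_def inj_on_def by auto
  moreover have "\<forall>i<n. \<exists>!j. (i, j) \<in> diagonal n" "\<forall>j<n. \<exists>!i. (i, j) \<in> diagonal n"
    unfolding diagonal_def by force+
  ultimately show ?thesis
    unfolding transversal_def by (auto simp: diagonal_def)
qed

text \<open>If n is odd, every symbol occurs on the diagonal an odd,
  hence nonzero, number of times, so the n diagonal cells carry all n symbols.
  If the entries are distinct, the symbol of cell (0,0) occurs there exactly
  once, so n is odd.\<close>
lemma diagonal_injective_iff_odd:
  assumes "n \<ge> 1" and lat: "latin_square n L" and sym: "symmetric_square n L"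
  shows "inj_on (\<lambda>i. L i i) {0..<n} \<longleftrightarrow> odd n"
proof
  assume inj: "inj_on (\<lambda>i. L i i) {0..<n}"
  have "i = 0" if "i < n" "L i i = L 0 0" for i
    using inj that \<open>n \<ge> 1\<close> unfolding inj_on_def by simp
  then have "{i. i < n \<and> L i i = L 0 0} = {0}"
    using \<open>n \<ge> 1\<close> by auto
  moreover have "L 0 0 \<in> {L i j | i j. i < n \<and> j < n}"
    using \<open>n \<ge> 1\<close> by force
  ultimately have "1 mod 2 = n mod 2"
    using diagonal_occurrences_parity[OF lat sym] by fastforce
  then show "odd n" by presburger
next
  assume "odd n"
  let ?symbols = "{L i j | i j. i < n \<and> j < n}"
  have "?symbols \<subseteq> (\<lambda>i. L i i) ` {0..<n}"
  proof
    fix s assume s: "s \<in> ?symbols"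
    then have "card {i. i < n \<and> L i i = s} mod 2 = 1"
      using diagonal_occurrences_parity[OF lat sym s] \<open>odd n\<close> by presburger
    then have "{i. i < n \<and> L i i = s} \<noteq> {}"
      by (metis card.empty mod_0 zero_neq_one)
    then show "s \<in> (\<lambda>i. L i i) ` {0..<n}" by auto
  qed
  moreover have "(\<lambda>i. L i i) ` {0..<n} \<subseteq> ?symbols" by fastforce
  ultimately have "(\<lambda>i. L i i) ` {0..<n} = ?symbols" by (rule subset_antisym[rotated])
  then have "card ((\<lambda>i. L i i) ` {0..<n}) = card {0..<n}"
    using lat unfolding latin_square_def by simp
  then show "inj_on (\<lambda>i. L i i) {0..<n}"
    by (simp add: inj_on_iff_eq_card)
qed

lemma transversal_swap:
  assumes sym: "symmetric_square n L" and T: "transversal n L T"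
  shows "transversal n L (prod.swap ` T)"
proof -
  have sub: "T \<subseteq> {0..<n} \<times> {0..<n}"
    using T unfolding transversal_def by blast
  then have "prod.swap ` T \<subseteq> {0..<n} \<times> {0..<n}"
    using image_mono[OF sub, of prod.swap] by (simp add: product_swap)
  moreover have "\<forall>i<n. \<exists>!j. (i, j) \<in> prod.swap ` T" "\<forall>j<n. \<exists>!i. (i, j) \<in> prod.swap ` T"
    using T unfolding transversal_def pair_in_swap_image by blast+
  moreover have "inj_on (\<lambda>(i, j). L i j) (prod.swap ` T)"
  proof -
    have mirror: "((\<lambda>(i, j). L i j) \<circ> prod.swap) c = (\<lambda>(i, j). L i j) c" if "c \<in> T" for c
    proof -
      obtain i j where c: "c = (i, j)" by (cases c)
      then have "i < n" "j < n" using sub that by auto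
      then show ?thesis using sym c unfolding symmetric_square_def by simp
    qed
    have "inj_on ((\<lambda>(i, j). L i j) \<circ> prod.swap) T \<longleftrightarrow> inj_on (\<lambda>(i, j). L i j) T"
      by (rule inj_on_cong) (rule mirror)
    moreover have "inj_on (\<lambda>(i, j). L i j) T"
      using T unfolding transversal_def by blast
    ultimately show ?thesis
      by (metis comp_inj_on_iff inj_swap)
  qed
  ultimately show ?thesis
    unfolding transversal_def by blast
qed

text \<open>A transversal invariant under transposition is the diagonal: a cell
  (i,j) and its mirror (j,i) carry the same symbol, so they coincide.\<close>
lemma transversal_swap_invariant:
  assumes sym: "symmetric_square n L" and T: "transversal n L T"
    and invariant: "prod.swap ` T = T"
  shows "T = diagonal n"
proof -
  have sub: "T \<subseteq> {0..<n} \<times> {0..<n}"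
    using T unfolding transversal_def by blast
  have on_diagonal: "i = j" if "(i, j) \<in> T" for i j
  proof -
    have "(j, i) \<in> T" using that invariant pair_in_swap_image by metis
    moreover have "L i j = L j i"
      using that sub sym unfolding symmetric_square_def by auto
    ultimately show ?thesis
      using that T unfolding transversal_def inj_on_def by auto
  qed
  have "(i, i) \<in> T" if "i < n" for i
    using that T on_diagonal unfolding transversal_def by blast
  moreover have "c \<in> diagonal n" if "c \<in> T" for c
    using that sub on_diagonal unfolding diagonal_def by (cases c) auto
  ultimately show ?thesis
    unfolding diagonal_def by auto
qed

lemma swap_invariant_transversals:
  assumes "n \<ge> 1" and "latin_square n L" and sym: "symmetric_square n L"
  shows "{T. transversal n L T \<and> prod.swap ` T = T} = (if odd n then {diagonal n} else {})"
proof -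
  have "prod.swap ` diagonal n = diagonal n"
    unfolding diagonal_def by (simp add: image_image)
  moreover have "transversal n L (diagonal n) \<longleftrightarrow> odd n"
    using transversal_diagonal_iff[of n L] diagonal_injective_iff_odd[OF assms] by simp
  ultimately show ?thesis
    using transversal_swap_invariant[OF sym] by auto
qed

theorem theorem4p5:
  fixes L :: "nat \<Rightarrow> nat \<Rightarrow> 'a" and n :: nat
  assumes "n \<ge> 1"
    and "latin_square n L"
    and "symmetric_square n L"
  shows "card {T. transversal n L T} mod 2 = n mod 2"
proof -
  let ?transversals = "{T. transversal n L T}"
  have "?transversals \<subseteq> Pow ({0..<n} \<times> {0..<n})"
    unfolding transversal_def by blast
  then have "finite ?transversals"
    by (rule finite_subset) simp
  then have "card ?transversals mod 2 = card {T \<in> ?transversals. prod.swap ` T = T} mod 2"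
    by (rule card_involution_parity) (simp_all add: transversal_swap[OF assms(3)] image_image)
  also have "{T \<in> ?transversals. prod.swap ` T = T} = (if odd n then {diagonal n} else {})"
    using swap_invariant_transversals[OF assms] by simp
  finally show ?thesis
    by (cases "odd n") (simp_all add: odd_iff_mod_2_eq_one)
qed

end
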